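(* Let $\Lambda$ be a finite non-uniform $m\times k$ rectangular grid with $m\geq 3$ and $k\geq 3$, and let $G$ be the graph produced by the construction described in the context. Then every missing edge that has an endpoint which is a boundary vertex of $\Lambda$ lies in a $2$-cell face of $G$.
   Context: $\Lambda$ has horizontal lines $h_1,\dots,h_m$ (bottom to top) and vertical lines $v_1,\dots,v_k$ (left to right) with arbitrary spacings; $p_{i,j}=h_i\cap v_j$. Its edges are the segments $p_{i,j}p_{i+1,j}$ and $p_{i,j}p_{i,j+1}$. Vertices on $h_1,h_m,v_1,v_k$ are boundary vertices; an edge with both endpoints boundary vertices is a boundary edge, all others are internal. The horizontal slab $H_i$ ($1\le i<m$) is the strip between $h_i,h_{i+1}$; the vertical slab $V_j$ ($1\le j<k$) is the strip between $v_j,v_{j+1}$; the width of a slab is the distance between its bounding lines. The red edges are $(p_{i,j},p_{i+1,j})$ and $(p_{i,j},p_{i,j+1})$ for $2\le i\le m-1$, $2\le j\le k-1$ with $i,j$ both even or both odd; all other internal edges are blue. Construction: let $G'$ be $\Lambda$ with all red edges removed, and $E'=\emptyset$. Iterate over the slabs $H_1,\dots,H_{m-1},V_1,\dots,V_{k-1}$ in non-decreasing order of width; for the current slab, consider the red edges lying in it (in any order); a red edge $(a,b)$ is added to $E'$ if both $a$ and $b$ currently have degree exactly $2$ in $G'\cup E'$. Finally $G=G'\cup E'$ (a plane straight-line graph). A missing edge is a red edge not in $G$. A cell of $\Lambda$ is a rectangle bounded by two consecutive horizontal and two consecutive vertical lines; a $2$-cell face of $G$ is a bounded face of $G$ that is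 the union of exactly two cells. *)

theory Defs
  imports "HOL-Analysis.Analysis"
begin

text \<open>Vertices of the grid are index pairs (i,j), meaning p_{i,j} = h_i \<inter> v_j,
  with 1 \<le> i \<le> m (row / horizontal line) and 1 \<le> j \<le> k (column / vertical line).\<close>

type_synonym vtx = "nat \<times> nat"
type_synonym edge = "vtx set"

definition grid_edges :: "nat \<Rightarrow> nat \<Rightarrow> edge set" where
  "grid_edges m k =
     {{(i,j),(Suc i,j)} | i j. 1 \<le> i \<and> i < m \<and> 1 \<le> j \<and> j \<le> k} \<union>
     {{(i,j),(i,Suc j)} | i j. 1 \<le> i \<and> i \<le> m \<and> 1 \<le> j \<and> j < k}"

definition boundary_vertex :: "nat \<Rightarrow> nat \<Rightarrow> vtx \<Rightarrow> bool" where
  "boundary_vertex m k v \<longleftrightarrow> fst v = 1 \<or> fst v = m \<or> snd v = 1 \<or> snd v = k"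

definition boundary_edge :: "nat \<Rightarrow> nat \<Rightarrow> edge \<Rightarrow> bool" where
  "boundary_edge m k e \<longleftrightarrow> (\<forall>v\<in>e. boundary_vertex m k v)"

definition internal_edges :: "nat \<Rightarrow> nat \<Rightarrow> edge set" where
  "internal_edges m k = {e \<in> grid_edges m k. \<not> boundary_edge m k e}"

definition red_edges :: "nat \<Rightarrow> nat \<Rightarrow> edge set" where
  "red_edges m k =
     {{(i,j),(Suc i,j)} | i j. 2 \<le> i \<and> i \<le> m - 1 \<and> 2 \<le> j \<and> j \<le> k - 1 \<and> (even i \<longleftrightarrow> even j)} \<union>
     {{(i,j),(i,Suc j)} | i j. 2 \<le> i \<and> i \<le> m - 1 \<and> 2 \<le> j \<and> j \<le> k - 1 \<and> (even i \<longleftrightarrow> even j)}"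

definition blue_edges :: "nat \<Rightarrow> nat \<Rightarrow> edge set" where
  "blue_edges m k = internal_edges m k - red_edges m k"

definition G_init :: "nat \<Rightarrow> nat \<Rightarrow> edge set" where
  "G_init m k = grid_edges m k - red_edges m k"

text \<open>Slabs: HS i is the horizontal slab between h_i and h_{i+1};
  VS j is the vertical slab between v_j and v_{j+1}.\<close>
datatype slab = HS nat | VS nat

definition slabs :: "nat \<Rightarrow> nat \<Rightarrow> slab set" where
  "slabs m k = HS ` {1..<m} \<union> VS ` {1..<k}"

fun slab_width :: "(nat \<Rightarrow> real) \<Rightarrow> (nat \<Rightarrow> real) \<Rightarrow> slab \<Rightarrow> real" where
  "slab_width xs ys (HS i) = ys (Suc i) - ys i"
| "slab_width xs ys (VS j) = xs (Suc j) - xs j"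

fun edge_in_slab :: "slab \<Rightarrow> edge \<Rightarrow> bool" where
  "edge_in_slab (HS i) e \<longleftrightarrow> (\<exists>j. e = {(i,j),(Suc i,j)})"
| "edge_in_slab (VS j) e \<longleftrightarrow> (\<exists>i. e = {(i,j),(i,Suc j)})"

definition degree :: "edge set \<Rightarrow> vtx \<Rightarrow> nat" where
  "degree E v = card {e \<in> E. v \<in> e}"

definition greedy_step :: "edge set \<Rightarrow> edge set \<Rightarrow> edge \<Rightarrow> edge set" where
  "greedy_step G0 E e = (if (\<forall>v\<in>e. degree (G0 \<union> E) v = 2) then insert e E else E)"

definition greedy_run :: "edge set \<Rightarrow> edge list \<Rightarrow> edge set" where
  "greedy_run G0 L = foldl (greedy_step G0) {} L"

definition valid_order ::
  "nat \<Rightarrow> nat \<Rightarrow> (nat \<Rightarrow> real) \<Rightarrow> (nat \<Rightarrow> real) \<Rightarrow> slab list \<Rightarrow> (slab \<Rightarrow> edge list) \<Rightarrow> bool" where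
  "valid_order m k xs ys sl ord \<longleftrightarrow>
     distinct sl \<and> set sl = slabs m k \<and>
     sorted_wrt (\<lambda>s t. slab_width xs ys s \<le> slab_width xs ys t) sl \<and>
     (\<forall>s\<in>set sl. distinct (ord s) \<and> set (ord s) = {e \<in> red_edges m k. edge_in_slab s e})"

definition constructed_graph :: "nat \<Rightarrow> nat \<Rightarrow> slab list \<Rightarrow> (slab \<Rightarrow> edge list) \<Rightarrow> edge set" where
  "constructed_graph m k sl ord =
     G_init m k \<union> greedy_run (G_init m k) (concat (map ord sl))"

text \<open>Geometry: x-coordinates xs j of v_j, y-coordinates ys i of h_i.\<close>
definition pt :: "(nat \<Rightarrow> real) \<Rightarrow> (nat \<Rightarrow> real) \<Rightarrow> vtx \<Rightarrow> real \<times> real" where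
  "pt xs ys v = (xs (snd v), ys (fst v))"

definition edge_seg :: "(nat \<Rightarrow> real) \<Rightarrow> (nat \<Rightarrow> real) \<Rightarrow> edge \<Rightarrow> (real \<times> real) set" where
  "edge_seg xs ys e = \<Union> {closed_segment (pt xs ys a) (pt xs ys b) | a b. e = {a,b}}"

definition edge_open_seg :: "(nat \<Rightarrow> real) \<Rightarrow> (nat \<Rightarrow> real) \<Rightarrow> edge \<Rightarrow> (real \<times> real) set" where
  "edge_open_seg xs ys e = \<Union> {open_segment (pt xs ys a) (pt xs ys b) | a b. e = {a,b}}"

definition drawing :: "(nat \<Rightarrow> real) \<Rightarrow> (nat \<Rightarrow> real) \<Rightarrow> edge set \<Rightarrow> (real \<times> real) set" where
  "drawing xs ys E = (\<Union>e\<in>E. edge_seg xs ys e)"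

definition faces :: "(nat \<Rightarrow> real) \<Rightarrow> (nat \<Rightarrow> real) \<Rightarrow> edge set \<Rightarrow> (real \<times> real) set set" where
  "faces xs ys E = components (- drawing xs ys E)"

definition cells :: "nat \<Rightarrow> nat \<Rightarrow> vtx set" where
  "cells m k = {(i,j). 1 \<le> i \<and> i < m \<and> 1 \<le> j \<and> j < k}"

definition cell :: "(nat \<Rightarrow> real) \<Rightarrow> (nat \<Rightarrow> real) \<Rightarrow> vtx \<Rightarrow> (real \<times> real) set" where
  "cell xs ys c = cbox (xs (snd c), ys (fst c)) (xs (Suc (snd c)), ys (Suc (fst c)))"

definition two_cell_face ::
  "nat \<Rightarrow> nat \<Rightarrow> (nat \<Rightarrow> real) \<Rightarrow> (nat \<Rightarrow> real) \<Rightarrow> edge set \<Rightarrow> (real \<times> real) set \<Rightarrow> bool" where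
  "two_cell_face m k xs ys E F \<longleftrightarrow>
     F \<in> faces xs ys E \<and> bounded F \<and>
     (\<exists>c1 c2. c1 \<in> cells m k \<and> c2 \<in> cells m k \<and> c1 \<noteq> c2 \<and>
              closure F = cell xs ys c1 \<union> cell xs ys c2)"

end

theory Submission
  imports Defs
begin

text \<open>A red edge \<open>e\<close> with a boundary endpoint joins a vertex \<open>u\<close> of the second-to-last row
  (column) to the top row (right column). Let \<open>f\<close> be the other red edge at \<open>u\<close>, parallel to
  that boundary. The two remaining grid edges at \<open>u\<close> are blue by parity, and the boundary
  endpoint of \<open>e\<close> has exactly two further edges, both boundary edges. So if \<open>f\<close> were missing
  as well, both endpoints of \<open>e\<close> would have degree 2 when \<open>e\<close> is processed, and \<open>e\<close> would have
  been added. Hence \<open>f\<close> is present, and the two cells on either side of \<open>e\<close> are enclosed by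
  \<open>f\<close> and blue or boundary edges, with \<open>e\<close> the only grid edge through their interior: they
  form a 2-cell face containing \<open>e\<close>.\<close>

section \<open>Segments and rectangles in the plane\<close>

lemma closed_segment_vertical:
  "closed_segment ((a::real), (b::real)) (a, d) = {a} \<times> closed_segment b d"
  by (auto simp: in_segment algebra_simps)

lemma closed_segment_horizontal:
  "closed_segment ((a::real), (b::real)) (c, b) = closed_segment a c \<times> {b}"
  by (auto simp: in_segment algebra_simps)

lemma open_segment_vertical:
  "open_segment ((a::real), (b::real)) (a, d) = {a} \<times> open_segment b d"
  by (auto simp: open_segment_def closed_segment_vertical)

lemma open_segment_horizontal:
  "open_segment ((a::real), (b::real)) (c, b) = open_segment a c \<times> {b}"
  by (auto simp: open_segment_def closed_segment_horizontal)

lemma mem_box_Pair: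
  "((x::real), (y::real)) \<in> box (a, c) (b, d) \<longleftrightarrow> a < x \<and> x < b \<and> c < y \<and> y < d"
  by (auto simp: mem_box Basis_prod_def)

lemma cbox_minus_box_subset_sides:
  fixes a b c d :: real
  shows "cbox (a, b) (c, d) - box (a, b) (c, d) \<subseteq>
    closed_segment (a, b) (c, b) \<union> closed_segment (a, d) (c, d) \<union>
    closed_segment (a, b) (a, d) \<union> closed_segment (c, b) (c, d)"
  by (force simp: mem_box_Pair closed_segment_horizontal closed_segment_vertical closed_segment_eq_real_ivl)

lemma box_in_components_Compl:
  fixes a b c d :: real
  assumes "a < c" "b < d" "box (a, b) (c, d) \<inter> D = {}" "cbox (a, b) (c, d) - box (a, b) (c, d) \<subseteq> D"
  shows "box (a, b) (c, d) \<in> components (- D)"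
  unfolding in_components_maximal
proof (intro conjI allI impI)
  let ?B = "box (a, b) (c, d)"
  show ne: "?B \<noteq> {}"
    using assms(1,2) by (simp add: box_ne_empty Basis_prod_def)
  show "?B \<subseteq> - D" "connected ?B"
    using assms(3) by (auto simp: convex_connected)
  fix S assume S: "S \<noteq> {} \<and> ?B \<subseteq> S \<and> S \<subseteq> - D \<and> connected S"
  have "frontier ?B \<subseteq> D"
    using assms(4) ne by (simp add: frontier_box)
  then have "S \<inter> frontier ?B = {}"
    using S by blast
  then show "S = ?B"
    using connected_Int_frontier[of S ?B] S ne by blast
qed

lemma edge_seg_doubleton:
  "edge_seg xs ys {u, w} = closed_segment (pt xs ys u) (pt xs ys w)"
proof -
  have "{closed_segment (pt xs ys a) (pt xs ys b) | a b. {u, w} = {a, b}} =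
        {closed_segment (pt xs ys u) (pt xs ys w)}" (is "?L = ?R")
  proof
    show "?L \<subseteq> ?R" by (auto simp: doubleton_eq_iff closed_segment_commute)
    show "?R \<subseteq> ?L" by blast
  qed
  then show ?thesis
    unfolding edge_seg_def by simp
qed

lemma edge_open_seg_doubleton:
  "edge_open_seg xs ys {u, w} = open_segment (pt xs ys u) (pt xs ys w)"
proof -
  have "{open_segment (pt xs ys a) (pt xs ys b) | a b. {u, w} = {a, b}} =
        {open_segment (pt xs ys u) (pt xs ys w)}" (is "?L = ?R")
  proof
    show "?L \<subseteq> ?R" by (auto simp: doubleton_eq_iff open_segment_commute)
    show "?R \<subseteq> ?L" by blast
  qed
  then show ?thesis
    unfolding edge_open_seg_def by simp
qed

lemma closed_segment_subset_drawing:
  "{u, w} \<in> G \<Longrightarrow> closed_segment (pt xs ys u) (pt xs ys w) \<subseteq> drawing xs ys G"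
  unfolding drawing_def by (metis UN_upper edge_seg_doubleton)

lemma closed_segment_subset_drawing_via:
  assumes "{u, v} \<in> G" "{v, w} \<in> G" "pt xs ys v \<in> closed_segment (pt xs ys u) (pt xs ys w)"
  shows "closed_segment (pt xs ys u) (pt xs ys w) \<subseteq> drawing xs ys G"
  using closed_segment_subset_drawing[OF assms(1)] closed_segment_subset_drawing[OF assms(2)]
    Un_closed_segment[OF assms(3)] by blast

lemma grid_edges_vertical_iff:
  "{(a, b), (Suc a, b)} \<in> grid_edges m k \<longleftrightarrow> 1 \<le> a \<and> a < m \<and> 1 \<le> b \<and> b \<le> k"
  unfolding grid_edges_def by (auto simp: doubleton_eq_iff)

lemma grid_edges_horizontal_iff:
  "{(a, b), (a, Suc b)} \<in> grid_edges m k \<longleftrightarrow> 1 \<le> a \<and> a \<le> m \<and> 1 \<le> b \<and> b < k"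
  unfolding grid_edges_def by (auto simp: doubleton_eq_iff)

lemma red_edges_vertical_iff:
  "{(a, b), (Suc a, b)} \<in> red_edges m k \<longleftrightarrow>
     2 \<le> a \<and> a \<le> m - 1 \<and> 2 \<le> b \<and> b \<le> k - 1 \<and> (even a \<longleftrightarrow> even b)"
  unfolding red_edges_def by (auto simp: doubleton_eq_iff)

lemma red_edges_horizontal_iff:
  "{(a, b), (a, Suc b)} \<in> red_edges m k \<longleftrightarrow>
     2 \<le> a \<and> a \<le> m - 1 \<and> 2 \<le> b \<and> b \<le> k - 1 \<and> (even a \<longleftrightarrow> even b)"
  unfolding red_edges_def by (auto simp: doubleton_eq_iff)

lemma red_edges_subset_grid_edges: "red_edges m k \<subseteq> grid_edges m k"
  unfolding red_edges_def by (auto simp: grid_edges_vertical_iff grid_edges_horizontal_iff)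

text \<open>For \<open>p = 0\<close> or \<open>q = 0\<close> truncated subtraction makes some of these degenerate; they are
  never grid edges, so this does not matter.\<close>
fun unit_edges_at :: "vtx \<Rightarrow> edge set" where
  "unit_edges_at (p, q) =
     {{(p - 1, q), (p, q)}, {(p, q), (Suc p, q)}, {(p, q - 1), (p, q)}, {(p, q), (p, Suc q)}}"

lemma grid_edge_in_unit_edges_at:
  assumes "g \<in> grid_edges m k" "v \<in> g"
  shows "g \<in> unit_edges_at v"
proof -
  from assms(1) consider (vertical) a b where "g = {(a, b), (Suc a, b)}"
    | (horizontal) a b where "g = {(a, b), (a, Suc b)}"
    unfolding grid_edges_def by blast
  then show ?thesis
    by cases (use assms(2) in \<open>auto simp: insert_commute\<close>)
qed

lemma degree_grid_subgraph:
  assumes "H \<subseteq> grid_edges m k"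
  shows "degree H v = card (H \<inter> unit_edges_at v)"
proof -
  have "v \<in> e" if "e \<in> unit_edges_at v" for e
    using that by (cases v) auto
  then have "{e \<in> H. v \<in> e} = H \<inter> unit_edges_at v"
    using assms grid_edge_in_unit_edges_at by blast
  then show ?thesis by (simp add: degree_def)
qed

section \<open>The greedy construction\<close>

lemma foldl_greedy_step_mono: "E \<subseteq> foldl (greedy_step G0) E L"
proof (induction L arbitrary: E)
  case (Cons e L)
  then show ?case
    by (metis foldl_Cons greedy_step_def order_trans subset_insertI)
qed simp

lemma foldl_greedy_step_subset: "foldl (greedy_step G0) E L \<subseteq> E \<union> set L"
proof (induction L arbitrary: E)
  case (Cons e L)
  have "greedy_step G0 E e \<subseteq> insert e E"
    by (auto simp: greedy_step_def)
  then show ?case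
    using Cons[of "greedy_step G0 E e"] by auto
qed simp

lemma greedy_run_missing_edge:
  assumes "e \<in> set L" "e \<notin> greedy_run G0 L"
  obtains E where "E \<subseteq> greedy_run G0 L" "\<exists>v\<in>e. degree (G0 \<union> E) v \<noteq> 2"
proof -
  obtain L1 L2 where L: "L = L1 @ e # L2"
    using split_list[OF assms(1)] by blast
  define E where "E = foldl (greedy_step G0) {} L1"
  have "greedy_run G0 L = foldl (greedy_step G0) (greedy_step G0 E e) L2"
    by (simp add: greedy_run_def L E_def)
  then have step: "greedy_step G0 E e \<subseteq> greedy_run G0 L"
    using foldl_greedy_step_mono by metis
  with assms(2) have "\<exists>v\<in>e. degree (G0 \<union> E) v \<noteq> 2"
    by (auto simp: greedy_step_def split: if_splits)
  moreover have "E \<subseteq> greedy_run G0 L"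
    using step by (auto simp: greedy_step_def split: if_splits)
  ultimately show thesis using that by blast
qed

lemma red_edge_in_slab:
  assumes "e \<in> red_edges m k"
  shows "\<exists>s\<in>slabs m k. edge_in_slab s e"
proof -
  from assms consider (vertical) i j where "e = {(i, j), (Suc i, j)}" "2 \<le> i" "i \<le> m - 1"
    | (horizontal) i j where "e = {(i, j), (i, Suc j)}" "2 \<le> j" "j \<le> k - 1"
    unfolding red_edges_def by blast
  then show ?thesis
  proof cases
    case vertical
    then show ?thesis by (intro bexI[of _ "HS i"]) (auto simp: slabs_def)
  next
    case horizontal
    then show ?thesis by (intro bexI[of _ "VS j"]) (auto simp: slabs_def)
  qed
qed

lemma set_concat_valid_order:
  assumes "valid_order m k xs ys sl ord"
  shows "set (concat (map ord sl)) = red_edges m k"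
  using assms red_edge_in_slab unfolding valid_order_def by fastforce

lemma non_red_grid_edge_in_constructed_graph:
  "g \<in> grid_edges m k \<Longrightarrow> g \<notin> red_edges m k \<Longrightarrow> g \<in> constructed_graph m k sl ord"
  by (simp add: constructed_graph_def G_init_def)

lemma constructed_graph_subset_grid_edges:
  assumes "valid_order m k xs ys sl ord"
  shows "constructed_graph m k sl ord \<subseteq> grid_edges m k"
  using foldl_greedy_step_subset[of "G_init m k" "{}" "concat (map ord sl)"]
    set_concat_valid_order[OF assms] red_edges_subset_grid_edges[of m k]
  by (auto simp: constructed_graph_def greedy_run_def G_init_def)

text \<open>\<open>H\<close> is \<open>G' \<union> E'\<close> at the moment \<open>e\<close> is processed.\<close>
lemma missing_red_edge_endpoint_degree:
  assumes "valid_order m k xs ys sl ord" "e \<in> red_edges m k" "e \<notin> constructed_graph m k sl ord"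
  obtains H where "G_init m k \<subseteq> H" "H \<subseteq> constructed_graph m k sl ord" "\<exists>v\<in>e. degree H v \<noteq> 2"
proof -
  let ?L = "concat (map ord sl)"
  have "e \<in> set ?L" "e \<notin> greedy_run (G_init m k) ?L"
    using assms set_concat_valid_order[OF assms(1)] by (auto simp: constructed_graph_def)
  then obtain E where "E \<subseteq> greedy_run (G_init m k) ?L" "\<exists>v\<in>e. degree (G_init m k \<union> E) v \<noteq> 2"
    by (rule greedy_run_missing_edge)
  then show thesis
    using that[of "G_init m k \<union> E"] by (auto simp: constructed_graph_def)
qed

section \<open>Faces bounded by grid edges\<close>

lemma grid_edge_meets_box:
  assumes xs: "strict_mono_on {1..k} xs" and ys: "strict_mono_on {1..m} ys"
    and g: "g \<in> grid_edges m k" and "1 \<le> r0" "r0 < r1" "r1 \<le> m" "1 \<le> c0" "c0 < c1" "c1 \<le> k"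
    and meet: "edge_seg xs ys g \<inter> box (pt xs ys (r0, c0)) (pt xs ys (r1, c1)) \<noteq> {}"
  shows "(\<exists>p q. g = {(p, q), (Suc p, q)} \<and> r0 \<le> p \<and> p < r1 \<and> c0 < q \<and> q < c1) \<or>
         (\<exists>p q. g = {(p, q), (p, Suc q)} \<and> r0 < p \<and> p < r1 \<and> c0 \<le> q \<and> q < c1)"
proof -
  obtain x y where seg: "(x, y) \<in> edge_seg xs ys g"
    and box: "xs c0 < x" "x < xs c1" "ys r0 < y" "y < ys r1"
    using meet by (auto simp: pt_def mem_box_Pair)
  note xless = strict_mono_on_less[OF xs] and yless = strict_mono_on_less[OF ys]
  from g consider (vertical) p q where "g = {(p, q), (Suc p, q)}" "1 \<le> p" "p < m" "1 \<le> q" "q \<le> k"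
    | (horizontal) p q where "g = {(p, q), (p, Suc q)}" "1 \<le> p" "p \<le> m" "1 \<le> q" "q < k"
    unfolding grid_edges_def by blast
  then show ?thesis
  proof cases
    case vertical
    have "ys p < ys (Suc p)"
      using yless[of p "Suc p"] vertical by simp
    then have "x = xs q" "ys p \<le> y" "y \<le> ys (Suc p)"
      using seg by (auto simp: vertical(1) edge_seg_doubleton pt_def closed_segment_vertical
          closed_segment_eq_real_ivl)
    then have "r0 < Suc p" "p < r1" "c0 < q" "q < c1"
      using box vertical assms(4-9) xless[of c0 q] xless[of q c1] yless[of r0 "Suc p"] yless[of p r1]
      by auto
    then show ?thesis
      using vertical(1) by auto
  next
    case horizontal
    have "xs q < xs (Suc q)"
      using xless[of q "Suc q"] horizontal by simp
    then have "y = ys p" "xs q \<le> x" "x \<le> xs (Suc q)"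
      using seg by (auto simp: horizontal(1) edge_seg_doubleton pt_def closed_segment_horizontal
          closed_segment_eq_real_ivl)
    then have "r0 < p" "p < r1" "c0 < Suc q" "q < c1"
      using box horizontal assms(4-9) yless[of r0 p] yless[of p r1] xless[of c0 "Suc q"] xless[of q c1]
      by auto
    then show ?thesis
      using horizontal(1) by auto
  qed
qed

lemma grid_box_in_faces:
  assumes xs: "strict_mono_on {1..k} xs" and ys: "strict_mono_on {1..m} ys"
    and G: "G \<subseteq> grid_edges m k"
    and r: "1 \<le> r0" "r0 < r1" "r1 \<le> m" and c: "1 \<le> c0" "c0 < c1" "c1 \<le> k"
    and no_vertical:
      "\<And>p q. r0 \<le> p \<Longrightarrow> p < r1 \<Longrightarrow> c0 < q \<Longrightarrow> q < c1 \<Longrightarrow> {(p, q), (Suc p, q)} \<notin> G"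
    and no_horizontal:
      "\<And>p q. r0 < p \<Longrightarrow> p < r1 \<Longrightarrow> c0 \<le> q \<Longrightarrow> q < c1 \<Longrightarrow> {(p, q), (p, Suc q)} \<notin> G"
    and boundary: "cbox (pt xs ys (r0, c0)) (pt xs ys (r1, c1)) -
                   box (pt xs ys (r0, c0)) (pt xs ys (r1, c1)) \<subseteq> drawing xs ys G"
  shows "box (pt xs ys (r0, c0)) (pt xs ys (r1, c1)) \<in> faces xs ys G"
proof -
  have "xs c0 < xs c1" "ys r0 < ys r1"
    using strict_mono_on_less[OF xs, of c0 c1] strict_mono_on_less[OF ys, of r0 r1] r c by auto
  moreover have "box (pt xs ys (r0, c0)) (pt xs ys (r1, c1)) \<inter> drawing xs ys G = {}"
    using grid_edge_meets_box[OF xs ys _ r c] G no_vertical no_horizontal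
    unfolding drawing_def by blast
  ultimately show ?thesis
    using box_in_components_Compl boundary unfolding faces_def pt_def by simp
qed

lemma two_cell_face_row:
  assumes xs: "strict_mono_on {1..k} xs" and ys: "strict_mono_on {1..m} ys"
    and "1 \<le> i" "Suc i \<le> m" "1 \<le> c" "Suc (Suc c) \<le> k"
    and face: "box (pt xs ys (i, c)) (pt xs ys (Suc i, Suc (Suc c))) \<in> faces xs ys G"
  shows "two_cell_face m k xs ys G (box (pt xs ys (i, c)) (pt xs ys (Suc i, Suc (Suc c))))"
proof -
  have "xs c < xs (Suc c)" "xs (Suc c) < xs (Suc (Suc c))" "ys i < ys (Suc i)"
    using strict_mono_on_less[OF xs, of c "Suc c"] strict_mono_on_less[OF xs, of "Suc c" "Suc (Suc c)"]
      strict_mono_on_less[OF ys, of i "Suc i"] assms(3-6) by auto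
  then have "closure (box (pt xs ys (i, c)) (pt xs ys (Suc i, Suc (Suc c)))) =
             cell xs ys (i, c) \<union> cell xs ys (i, Suc c)"
    by (auto simp: pt_def cell_def box_ne_empty Basis_prod_def)
  moreover have "(i, c) \<in> cells m k" "(i, Suc c) \<in> cells m k"
    using assms(3-6) by (auto simp: cells_def)
  ultimately show ?thesis
    unfolding two_cell_face_def
    by (intro conjI face bounded_box exI[of _ "(i, c)"] exI[of _ "(i, Suc c)"]) auto
qed

lemma two_cell_face_column:
  assumes xs: "strict_mono_on {1..k} xs" and ys: "strict_mono_on {1..m} ys"
    and "1 \<le> r" "Suc (Suc r) \<le> m" "1 \<le> j" "Suc j \<le> k"
    and face: "box (pt xs ys (r, j)) (pt xs ys (Suc (Suc r), Suc j)) \<in> faces xs ys G"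
  shows "two_cell_face m k xs ys G (box (pt xs ys (r, j)) (pt xs ys (Suc (Suc r), Suc j)))"
proof -
  have "ys r < ys (Suc r)" "ys (Suc r) < ys (Suc (Suc r))" "xs j < xs (Suc j)"
    using strict_mono_on_less[OF ys, of r "Suc r"] strict_mono_on_less[OF ys, of "Suc r" "Suc (Suc r)"]
      strict_mono_on_less[OF xs, of j "Suc j"] assms(3-6) by auto
  then have "closure (box (pt xs ys (r, j)) (pt xs ys (Suc (Suc r), Suc j))) =
             cell xs ys (r, j) \<union> cell xs ys (Suc r, j)"
    by (auto simp: pt_def cell_def box_ne_empty Basis_prod_def)
  moreover have "(r, j) \<in> cells m k" "(Suc r, j) \<in> cells m k"
    using assms(3-6) by (auto simp: cells_def)
  ultimately show ?thesis
    unfolding two_cell_face_def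
    by (intro conjI face bounded_box exI[of _ "(r, j)"] exI[of _ "(Suc r, j)"]) auto
qed

lemma pt_in_row_segment:
  assumes "strict_mono_on {1..k} xs" "1 \<le> a" "a \<le> b" "b \<le> c" "c \<le> k"
  shows "pt xs ys (i, b) \<in> closed_segment (pt xs ys (i, a)) (pt xs ys (i, c))"
  using strict_mono_on_less_eq[OF assms(1), of a b] strict_mono_on_less_eq[OF assms(1), of b c] assms(2-5)
  by (simp add: pt_def closed_segment_horizontal closed_segment_eq_real_ivl)

lemma pt_in_column_segment:
  assumes "strict_mono_on {1..m} ys" "1 \<le> a" "a \<le> b" "b \<le> c" "c \<le> m"
  shows "pt xs ys (b, j) \<in> closed_segment (pt xs ys (a, j)) (pt xs ys (c, j))"
  using strict_mono_on_less_eq[OF assms(1), of a b] strict_mono_on_less_eq[OF assms(1), of b c] assms(2-5)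
  by (simp add: pt_def closed_segment_vertical closed_segment_eq_real_ivl)

section \<open>Missing edges at the boundary\<close>

lemma missing_top_edge_in_two_cell_face:
  assumes xs: "strict_mono_on {1..k} xs" and ys: "strict_mono_on {1..m} ys"
    and order: "valid_order m k xs ys sl ord"
    and red: "{(i, j), (Suc i, j)} \<in> red_edges m k" and top: "m = Suc i"
    and missing: "{(i, j), (Suc i, j)} \<notin> constructed_graph m k sl ord"
  shows "\<exists>F. two_cell_face m k xs ys (constructed_graph m k sl ord) F \<and>
             edge_open_seg xs ys {(i, j), (Suc i, j)} \<subseteq> F"
proof -
  let ?G = "constructed_graph m k sl ord"
  define e where "e = {(i, j), (Suc i, j)}"
  define r where "r = i - 1"
  define c where "c = j - 1"
  have ij: "i = Suc r" "j = Suc c" "1 \<le> r" "1 \<le> c" "Suc j \<le> k" "even i \<longleftrightarrow> even j"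
    using red top by (auto simp: r_def c_def red_edges_vertical_iff)
  have G: "?G \<subseteq> grid_edges m k"
    using constructed_graph_subset_grid_edges[OF order] .
  define f where "f = {(i, j), (i, Suc j)}"
  have f: "f \<in> ?G"
  proof (rule ccontr)
    assume "f \<notin> ?G"
    obtain H where H: "G_init m k \<subseteq> H" "H \<subseteq> ?G" and deg: "\<exists>v\<in>e. degree H v \<noteq> 2"
      using missing_red_edge_endpoint_degree[OF order red[folded e_def] missing[folded e_def]] by blast
    have H_grid: "H \<subseteq> grid_edges m k" and "e \<notin> H" "f \<notin> H"
      using H G missing \<open>f \<notin> ?G\<close> by (auto simp: e_def)
    moreover have "{(r, j), (i, j)} \<in> H" "{(i, c), (i, j)} \<in> H"
      "{(Suc i, c), (Suc i, j)} \<in> H" "{(Suc i, j), (Suc i, Suc j)} \<in> H"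
      using H(1) ij top by (auto simp: G_init_def grid_edges_vertical_iff grid_edges_horizontal_iff
          red_edges_vertical_iff red_edges_horizontal_iff)
    moreover have "{(Suc i, j), (Suc (Suc i), j)} \<notin> H"
      using H_grid top by (auto simp: grid_edges_vertical_iff)
    ultimately have "degree H (i, j) = 2" "degree H (Suc i, j) = 2"
      by (auto simp: degree_grid_subgraph[OF H_grid] e_def f_def Int_insert_right doubleton_eq_iff
          ij(1,2))
    then show False
      using deg by (auto simp: e_def)
  qed
  define F where "F = box (pt xs ys (i, c)) (pt xs ys (Suc i, Suc j))"
  have sides: "cbox (pt xs ys (i, c)) (pt xs ys (Suc i, Suc j)) - F \<subseteq> drawing xs ys ?G"
  proof -
    have "closed_segment (pt xs ys (i, c)) (pt xs ys (i, Suc j)) \<subseteq> drawing xs ys ?G"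
      by (rule closed_segment_subset_drawing_via
          [OF non_red_grid_edge_in_constructed_graph f[unfolded f_def] pt_in_row_segment[OF xs]])
          (use ij in \<open>auto simp: grid_edges_horizontal_iff red_edges_horizontal_iff top\<close>)
    moreover have "closed_segment (pt xs ys (Suc i, c)) (pt xs ys (Suc i, Suc j)) \<subseteq> drawing xs ys ?G"
      by (rule closed_segment_subset_drawing_via[where v = "(Suc i, j)"];
          (intro non_red_grid_edge_in_constructed_graph pt_in_row_segment[OF xs])?;
          use ij in \<open>auto simp: grid_edges_horizontal_iff red_edges_horizontal_iff top\<close>)
    moreover have "closed_segment (pt xs ys (i, c)) (pt xs ys (Suc i, c)) \<subseteq> drawing xs ys ?G"
      "closed_segment (pt xs ys (i, Suc j)) (pt xs ys (Suc i, Suc j)) \<subseteq> drawing xs ys ?G"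
      by (intro closed_segment_subset_drawing non_red_grid_edge_in_constructed_graph;
          use ij in \<open>auto simp: grid_edges_vertical_iff red_edges_vertical_iff top\<close>)+
    ultimately show ?thesis
      using cbox_minus_box_subset_sides[of "xs c" "ys i" "xs (Suc j)" "ys (Suc i)"]
      by (auto simp: F_def pt_def)
  qed
  have "F \<in> faces xs ys ?G"
    unfolding F_def
  proof (rule grid_box_in_faces[OF xs ys G])
    show "{(p, q), (Suc p, q)} \<notin> ?G" if "i \<le> p" "p < Suc i" "c < q" "q < Suc j" for p q
      using that missing ij by (auto simp: le_Suc_eq less_Suc_eq)
  qed (use ij top sides F_def in auto)
  then have "two_cell_face m k xs ys ?G F"
    unfolding F_def ij(2) using ij top by (intro two_cell_face_row[OF xs ys]) auto
  moreover have "edge_open_seg xs ys e \<subseteq> F"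
    using strict_mono_on_less[OF xs, of c j] strict_mono_on_less[OF xs, of j "Suc j"]
      strict_mono_on_less[OF ys, of i "Suc i"] ij top
    by (auto simp: e_def F_def edge_open_seg_doubleton pt_def open_segment_vertical
        open_segment_eq_real_ivl mem_box_Pair)
  ultimately show ?thesis
    unfolding e_def by blast
qed

lemma missing_right_edge_in_two_cell_face:
  assumes xs: "strict_mono_on {1..k} xs" and ys: "strict_mono_on {1..m} ys"
    and order: "valid_order m k xs ys sl ord"
    and red: "{(i, j), (i, Suc j)} \<in> red_edges m k" and right: "k = Suc j"
    and missing: "{(i, j), (i, Suc j)} \<notin> constructed_graph m k sl ord"
  shows "\<exists>F. two_cell_face m k xs ys (constructed_graph m k sl ord) F \<and>
             edge_open_seg xs ys {(i, j), (i, Suc j)} \<subseteq> F"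
proof -
  let ?G = "constructed_graph m k sl ord"
  define e where "e = {(i, j), (i, Suc j)}"
  define r where "r = i - 1"
  define c where "c = j - 1"
  have ij: "i = Suc r" "j = Suc c" "1 \<le> r" "1 \<le> c" "Suc i \<le> m" "even i \<longleftrightarrow> even j"
    using red right by (auto simp: r_def c_def red_edges_horizontal_iff)
  have G: "?G \<subseteq> grid_edges m k"
    using constructed_graph_subset_grid_edges[OF order] .
  define f where "f = {(i, j), (Suc i, j)}"
  have f: "f \<in> ?G"
  proof (rule ccontr)
    assume "f \<notin> ?G"
    obtain H where H: "G_init m k \<subseteq> H" "H \<subseteq> ?G" and deg: "\<exists>v\<in>e. degree H v \<noteq> 2"
      using missing_red_edge_endpoint_degree[OF order red[folded e_def] missing[folded e_def]] by blast
    have H_grid: "H \<subseteq> grid_edges m k" and "e \<notin> H" "f \<notin> H"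
      using H G missing \<open>f \<notin> ?G\<close> by (auto simp: e_def)
    moreover have "{(r, j), (i, j)} \<in> H" "{(i, c), (i, j)} \<in> H"
      "{(r, Suc j), (i, Suc j)} \<in> H" "{(i, Suc j), (Suc i, Suc j)} \<in> H"
      using H(1) ij right by (auto simp: G_init_def grid_edges_vertical_iff grid_edges_horizontal_iff
          red_edges_vertical_iff red_edges_horizontal_iff)
    moreover have "{(i, Suc j), (i, Suc (Suc j))} \<notin> H"
      using H_grid right by (auto simp: grid_edges_horizontal_iff)
    ultimately have "degree H (i, j) = 2" "degree H (i, Suc j) = 2"
      by (auto simp: degree_grid_subgraph[OF H_grid] e_def f_def Int_insert_right doubleton_eq_iff
          ij(1,2))
    then show False
      using deg by (auto simp: e_def)
  qed
  define F where "F = box (pt xs ys (r, j)) (pt xs ys (Suc i, Suc j))"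
  have sides: "cbox (pt xs ys (r, j)) (pt xs ys (Suc i, Suc j)) - F \<subseteq> drawing xs ys ?G"
  proof -
    have "closed_segment (pt xs ys (r, j)) (pt xs ys (Suc i, j)) \<subseteq> drawing xs ys ?G"
      by (rule closed_segment_subset_drawing_via
          [OF non_red_grid_edge_in_constructed_graph f[unfolded f_def] pt_in_column_segment[OF ys]])
          (use ij in \<open>auto simp: grid_edges_vertical_iff red_edges_vertical_iff right\<close>)
    moreover have "closed_segment (pt xs ys (r, Suc j)) (pt xs ys (Suc i, Suc j)) \<subseteq> drawing xs ys ?G"
      by (rule closed_segment_subset_drawing_via[where v = "(i, Suc j)"];
          (intro non_red_grid_edge_in_constructed_graph pt_in_column_segment[OF ys])?;
          use ij in \<open>auto simp: grid_edges_vertical_iff red_edges_vertical_iff right\<close>)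
    moreover have "closed_segment (pt xs ys (r, j)) (pt xs ys (r, Suc j)) \<subseteq> drawing xs ys ?G"
      "closed_segment (pt xs ys (Suc i, j)) (pt xs ys (Suc i, Suc j)) \<subseteq> drawing xs ys ?G"
      by (intro closed_segment_subset_drawing non_red_grid_edge_in_constructed_graph;
          use ij in \<open>auto simp: grid_edges_horizontal_iff red_edges_horizontal_iff right\<close>)+
    ultimately show ?thesis
      using cbox_minus_box_subset_sides[of "xs j" "ys r" "xs (Suc j)" "ys (Suc i)"]
      by (auto simp: F_def pt_def)
  qed
  have "F \<in> faces xs ys ?G"
    unfolding F_def
  proof (rule grid_box_in_faces[OF xs ys G])
    show "{(p, q), (p, Suc q)} \<notin> ?G" if "r < p" "p < Suc i" "j \<le> q" "q < Suc j" for p q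
      using that missing ij by (auto simp: le_Suc_eq less_Suc_eq)
  qed (use ij right sides F_def in auto)
  then have "two_cell_face m k xs ys ?G F"
    unfolding F_def ij(1) using ij right by (intro two_cell_face_column[OF xs ys]) auto
  moreover have "edge_open_seg xs ys e \<subseteq> F"
    using strict_mono_on_less[OF ys, of r i] strict_mono_on_less[OF ys, of i "Suc i"]
      strict_mono_on_less[OF xs, of j "Suc j"] ij right
    by (auto simp: e_def F_def edge_open_seg_doubleton pt_def open_segment_horizontal
        open_segment_eq_real_ivl mem_box_Pair)
  ultimately show ?thesis
    unfolding e_def by blast
qed

theorem lemma3:
  fixes m k :: nat and xs ys :: "nat \<Rightarrow> real"
    and sl :: "slab list" and ord :: "slab \<Rightarrow> edge list" and e :: edge
  assumes "m \<ge> 3" and "k \<ge> 3"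
    and "strict_mono_on {1..k} xs" and "strict_mono_on {1..m} ys"
    and "valid_order m k xs ys sl ord"
    and "e \<in> red_edges m k" and "e \<notin> constructed_graph m k sl ord"
    and "\<exists>v\<in>e. boundary_vertex m k v"
  shows "\<exists>F. two_cell_face m k xs ys (constructed_graph m k sl ord) F
             \<and> edge_open_seg xs ys e \<subseteq> F"
proof -
  \<comment> \<open>The bounds \<open>m \<ge> 3\<close>, \<open>k \<ge> 3\<close> are implied by the existence of a red edge.\<close>
  from assms(6) consider
      (vertical) i j where "e = {(i, j), (Suc i, j)}" "2 \<le> i" "i \<le> m - 1" "2 \<le> j" "j \<le> k - 1"
    | (horizontal) i j where "e = {(i, j), (i, Suc j)}" "2 \<le> i" "i \<le> m - 1" "2 \<le> j"
        "j \<le> k - 1"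
    unfolding red_edges_def by blast
  then show ?thesis
  proof cases
    case vertical
    then have "m = Suc i"
      using assms(8) by (auto simp: boundary_vertex_def)
    then show ?thesis
      using missing_top_edge_in_two_cell_face[OF assms(3-5)] assms(6,7) vertical(1) by blast
  next
    case horizontal
    then have "k = Suc j"
      using assms(8) by (auto simp: boundary_vertex_def)
    then show ?thesis
      using missing_right_edge_in_two_cell_face[OF assms(3-5)] assms(6,7) horizontal(1) by blast
  qed
qed

end
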